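(* Let $B$ be a unital $C^*$-algebra, $A\subseteq B$ a norm-closed subalgebra containing the unit of $B$, and $q\in B^{**}$ a projection. The following are equivalent: (1) $q$ lies in the weak* closure of $A$ in $B^{**}$; (2) $q\in A^{\perp\perp}$; (3) $A^{\perp}\subseteq (qA)_{\perp}$; (3') $A^{\perp}\subseteq (Aq)_{\perp}$; (4) $A^{\perp}\subseteq (qAq)_{\perp}$; (5) for every $\mu\in A^{\perp}$, $\mu q\in A^{\perp}$; (5') for every $\mu\in A^\perp$, $q\mu\in A^\perp$; (6) for every $\mu\in A^{\perp}$, $q\mu q\in A^{\perp}$.
   Context: $A^{\perp}\subseteq B^*$ is the annihilator of $A$ and $A^{\perp\perp}\subseteq B^{**}$. For a subset $S\subseteq B^{**}$, $S_{\perp}=\{\varphi\in B^*:\varphi(s)=0\ \forall s\in S\}$, where each $\varphi\in B^*$ is regarded as a weak* continuous functional on $B^{**}$. For $\mu\in B^*$ and $q\in B^{**}$, $\mu q, q\mu, q\mu q\in B^*$ are defined by $(\mu q)(x)=\mu(qx)$, $(q\mu)(x)=\mu(xq)$, $(q\mu q)(x)=\mu(qxq)$ for $x\in B$. *)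

theory Defs
  imports "HOL-Analysis.Analysis"
begin

text \<open>A unital C*-algebra is modelled on a type 'b of class real_normed_algebra_1 and banach
 (complete, associative, unital, norm 1 = 1), together with a complex scalar multiplication sc
 extending the real one and an involution st, satisfying the C*-axioms.\<close>

definition cstar_algebra :: "(complex \<Rightarrow> 'b::real_normed_algebra_1 \<Rightarrow> 'b) \<Rightarrow> ('b \<Rightarrow> 'b) \<Rightarrow> bool" where
  "cstar_algebra sc st \<longleftrightarrow>
    (\<forall>r x. sc (complex_of_real r) x = scaleR r x) \<and>
    (\<forall>a b x. sc (a * b) x = sc a (sc b x)) \<and>
    (\<forall>a x y. sc a (x + y) = sc a x + sc a y) \<and>
    (\<forall>a b x. sc (a + b) x = sc a x + sc b x) \<and>
    (\<forall>a x y. sc a (x * y) = sc a x * y \<and> sc a (x * y) = x * sc a y) \<and>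
    (\<forall>a x. norm (sc a x) = cmod a * norm x) \<and>
    (\<forall>x y. st (x + y) = st x + st y) \<and>
    (\<forall>a x. st (sc a x) = sc (cnj a) (st x)) \<and>
    (\<forall>x y. st (x * y) = st y * st x) \<and>
    (\<forall>x. st (st x) = x) \<and>
    (\<forall>x. norm (st x * x) = (norm x)\<^sup>2)"

definition unital_closed_subalgebra :: "(complex \<Rightarrow> 'b \<Rightarrow> 'b) \<Rightarrow> 'b::real_normed_algebra_1 set \<Rightarrow> bool" where
  "unital_closed_subalgebra sc A \<longleftrightarrow>
    closed A \<and> 1 \<in> A \<and>
    (\<forall>x\<in>A. \<forall>y\<in>A. x + y \<in> A \<and> x * y \<in> A) \<and>
    (\<forall>a. \<forall>x\<in>A. sc a x \<in> A)"

definition dual :: "(complex \<Rightarrow> 'b \<Rightarrow> 'b) \<Rightarrow> ('b::real_normed_vector \<Rightarrow> complex) set" where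
  "dual sc = {\<phi>. (\<forall>x y. \<phi> (x + y) = \<phi> x + \<phi> y) \<and> (\<forall>a x. \<phi> (sc a x) = a * \<phi> x) \<and>
                 (\<exists>K. \<forall>x. cmod (\<phi> x) \<le> K * norm x)}"

definition dnorm :: "('b::real_normed_vector \<Rightarrow> complex) \<Rightarrow> real" where
  "dnorm \<phi> = (SUP x\<in>{x. norm x \<le> 1}. cmod (\<phi> x))"

text \<open>The bidual B**: bounded complex-linear functionals on B*, normalised to be 0 off B*.\<close>
definition bidual :: "(complex \<Rightarrow> 'b \<Rightarrow> 'b) \<Rightarrow> (('b::real_normed_vector \<Rightarrow> complex) \<Rightarrow> complex) set" where
  "bidual sc = {m. (\<forall>\<phi>\<in>dual sc. \<forall>\<psi>\<in>dual sc. m (\<lambda>x. \<phi> x + \<psi> x) = m \<phi> + m \<psi>) \<and>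
                   (\<forall>a. \<forall>\<phi>\<in>dual sc. m (\<lambda>x. a * \<phi> x) = a * m \<phi>) \<and>
                   (\<exists>K. \<forall>\<phi>\<in>dual sc. cmod (m \<phi>) \<le> K * dnorm \<phi>) \<and>
                   (\<forall>\<phi>. \<phi> \<notin> dual sc \<longrightarrow> m \<phi> = 0)}"

definition emb :: "(complex \<Rightarrow> 'b \<Rightarrow> 'b) \<Rightarrow> 'b::real_normed_vector \<Rightarrow> (('b \<Rightarrow> complex) \<Rightarrow> complex)" where
  "emb sc x = (\<lambda>\<phi>. if \<phi> \<in> dual sc then \<phi> x else 0)"

text \<open>(First) Arens product on B**:  (m n)(phi) = m(n.phi), (n.phi)(a) = n(phi.a), (phi.a)(b) = phi(a b).\<close>
definition arens :: "(complex \<Rightarrow> 'b \<Rightarrow> 'b) \<Rightarrow> (('b::real_normed_algebra \<Rightarrow> complex) \<Rightarrow> complex)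
    \<Rightarrow> (('b \<Rightarrow> complex) \<Rightarrow> complex) \<Rightarrow> (('b \<Rightarrow> complex) \<Rightarrow> complex)" where
  "arens sc m n = (\<lambda>\<phi>. if \<phi> \<in> dual sc then m (\<lambda>a. n (\<lambda>b. \<phi> (a * b))) else 0)"

definition bidual_star :: "(complex \<Rightarrow> 'b \<Rightarrow> 'b) \<Rightarrow> ('b \<Rightarrow> 'b) \<Rightarrow> (('b::real_normed_vector \<Rightarrow> complex) \<Rightarrow> complex)
    \<Rightarrow> (('b \<Rightarrow> complex) \<Rightarrow> complex)" where
  "bidual_star sc st m = (\<lambda>\<phi>. if \<phi> \<in> dual sc then cnj (m (\<lambda>x. cnj (\<phi> (st x)))) else 0)"

definition bidual_projection :: "(complex \<Rightarrow> 'b \<Rightarrow> 'b) \<Rightarrow> ('b \<Rightarrow> 'b) \<Rightarrow> (('b::real_normed_algebra \<Rightarrow> complex) \<Rightarrow> complex) \<Rightarrow> bool" where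
  "bidual_projection sc st q \<longleftrightarrow> q \<in> bidual sc \<and> arens sc q q = q \<and> bidual_star sc st q = q"

text \<open>Closure in B** for the weak* topology sigma(B**, B*) (pointwise convergence on B*),
 written via basic neighbourhoods.\<close>
definition weak_star_closure :: "(complex \<Rightarrow> 'b \<Rightarrow> 'b) \<Rightarrow> (('b::real_normed_vector \<Rightarrow> complex) \<Rightarrow> complex) set
    \<Rightarrow> (('b \<Rightarrow> complex) \<Rightarrow> complex) set" where
  "weak_star_closure sc S = {m \<in> bidual sc. \<forall>F \<epsilon>. finite F \<and> F \<subseteq> dual sc \<and> \<epsilon> > 0 \<longrightarrow>
       (\<exists>s\<in>S. \<forall>\<phi>\<in>F. cmod (m \<phi> - s \<phi>) < \<epsilon>)}"

definition annihilator :: "(complex \<Rightarrow> 'b \<Rightarrow> 'b) \<Rightarrow> 'b::real_normed_vector set \<Rightarrow> ('b \<Rightarrow> complex) set" where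
  "annihilator sc A = {\<phi> \<in> dual sc. \<forall>a\<in>A. \<phi> a = 0}"

definition biannihilator :: "(complex \<Rightarrow> 'b \<Rightarrow> 'b) \<Rightarrow> 'b::real_normed_vector set \<Rightarrow> (('b \<Rightarrow> complex) \<Rightarrow> complex) set" where
  "biannihilator sc A = {m \<in> bidual sc. \<forall>\<phi>\<in>annihilator sc A. m \<phi> = 0}"

definition preannihilator :: "(complex \<Rightarrow> 'b \<Rightarrow> 'b) \<Rightarrow> (('b::real_normed_vector \<Rightarrow> complex) \<Rightarrow> complex) set \<Rightarrow> ('b \<Rightarrow> complex) set" where
  "preannihilator sc S = {\<phi> \<in> dual sc. \<forall>s\<in>S. s \<phi> = 0}"

text \<open>Module actions: (mu q)(x) = mu(q x), (q mu)(x) = mu(x q), (q mu q)(x) = mu(q x q),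
 where mu is viewed as the weak* continuous functional s \<mapsto> s mu on B**.\<close>
definition fun_right :: "(complex \<Rightarrow> 'b \<Rightarrow> 'b) \<Rightarrow> ('b::real_normed_algebra \<Rightarrow> complex) \<Rightarrow> (('b \<Rightarrow> complex) \<Rightarrow> complex) \<Rightarrow> ('b \<Rightarrow> complex)" where
  "fun_right sc \<mu> q = (\<lambda>x. arens sc q (emb sc x) \<mu>)"

definition fun_left :: "(complex \<Rightarrow> 'b \<Rightarrow> 'b) \<Rightarrow> (('b::real_normed_algebra \<Rightarrow> complex) \<Rightarrow> complex) \<Rightarrow> ('b \<Rightarrow> complex) \<Rightarrow> ('b \<Rightarrow> complex)" where
  "fun_left sc q \<mu> = (\<lambda>x. arens sc (emb sc x) q \<mu>)"

definition fun_both :: "(complex \<Rightarrow> 'b \<Rightarrow> 'b) \<Rightarrow> (('b::real_normed_algebra \<Rightarrow> complex) \<Rightarrow> complex) \<Rightarrow> ('b \<Rightarrow> complex) \<Rightarrow> ('b \<Rightarrow> complex)" where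
  "fun_both sc q \<mu> = (\<lambda>x. arens sc (arens sc q (emb sc x)) q \<mu>)"

end

theory Submission
  imports Defs
begin

(* (1) <-> (2) is a statement about subspaces only: the weak* closure of a complex subspace A
   of B in B** is A^perp^perp.  Since the weak* topology is pointwise convergence on B*, it
   suffices to show that an element q of A^perp^perp can be matched exactly on any finite set F
   of functionals by some a in A; this is finite-dimensional linear algebra (a functional
   vanishing on A and on the common kernel of F is a linear combination of F on A).

   Evaluated at a in A, the functionals
   mu q, q mu, q mu q of (5), (5'), (6) are exactly (q a)(mu), (a q)(mu), (q a q)(mu) of
   (3), (3'), (4), and they always lie in B*; so (5) <-> (3), (5') <-> (3'), (6) <-> (4).
   Explicit formulas for the Arens products show that each of (3), (3'), (4) means that q
   kills certain translates of annihilating functionals.  Because A is an algebra, A^perp is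
   stable under translation by elements of A, which gives (2) -> (3), (3'), (4); taking
   a = 1 (and q q = q for (4)) gives the converses. *)

section \<open>Bounded functionals with respect to a complex scalar multiplication\<close>

text \<open>The dual space is taken with respect to a complex scalar multiplication sc that
  extends the real one; this is all that is needed for duality arguments.\<close>

locale complex_scalars =
  fixes sc :: "complex \<Rightarrow> 'b::real_normed_vector \<Rightarrow> 'b"
  assumes sc_of_real: "\<And>r x. sc (complex_of_real r) x = scaleR r x"
begin

lemma dualD:
  assumes "\<phi> \<in> dual sc"
  shows dual_add: "\<phi> (x + y) = \<phi> x + \<phi> y" and dual_sc: "\<phi> (sc a x) = a * \<phi> x"
  using assms unfolding dual_def by auto

lemma dualI:
  assumes "\<And>x y. \<phi> (x + y) = \<phi> x + \<phi> y" "\<And>a x. \<phi> (sc a x) = a * \<phi> x"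
    and "\<And>x. cmod (\<phi> x) \<le> K * norm x"
  shows "\<phi> \<in> dual sc"
  using assms unfolding dual_def by auto

lemma dual_bdd_above:
  assumes "\<phi> \<in> dual sc"
  shows "bdd_above ((\<lambda>x. cmod (\<phi> x)) ` {x. norm x \<le> 1})"
proof -
  obtain K where K: "\<And>x. cmod (\<phi> x) \<le> K * norm x"
    using assms unfolding dual_def by auto
  have "cmod (\<phi> x) \<le> max K 0" if "norm x \<le> 1" for x
  proof -
    have "K * norm x \<le> max K 0"
      using that mult_left_le[of "norm x" K] mult_nonpos_nonneg[of K "norm x"] by force
    then show ?thesis using K[of x] by linarith
  qed
  then show ?thesis by (intro bdd_aboveI2) auto
qed

lemma dnorm_bound:
  assumes "\<phi> \<in> dual sc"
  shows "cmod (\<phi> x) \<le> dnorm \<phi> * norm x"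
proof (cases "x = 0")
  case True
  then show ?thesis using dual_add[OF assms, of 0 0] by simp
next
  case False
  define u where "u = scaleR (1 / norm x) x"
  have "norm u = 1" using False by (simp add: u_def)
  then have "cmod (\<phi> u) \<le> dnorm \<phi>"
    unfolding dnorm_def by (intro cSUP_upper[OF _ dual_bdd_above[OF assms]]) simp
  moreover have "u = sc (complex_of_real (1 / norm x)) x"
    by (simp only: u_def sc_of_real)
  then have "\<phi> u = of_real (1 / norm x) * \<phi> x"
    by (simp only: dual_sc[OF assms])
  ultimately have "cmod (\<phi> x) / norm x \<le> dnorm \<phi>" by (simp add: norm_divide)
  then show ?thesis using False by (simp add: divide_le_eq mult.commute)
qed

lemma dnorm_nonneg:
  assumes "\<phi> \<in> dual sc"
  shows "0 \<le> dnorm \<phi>"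
proof -
  have "cmod (\<phi> 0) \<le> dnorm \<phi>"
    unfolding dnorm_def by (intro cSUP_upper[OF _ dual_bdd_above[OF assms]]) simp
  then show ?thesis by (meson norm_ge_zero order_trans)
qed

lemma dnorm_le:
  fixes \<psi> :: "'b \<Rightarrow> complex"
  assumes "\<And>x. cmod (\<psi> x) \<le> C * norm x" and "0 \<le> C"
  shows "dnorm \<psi> \<le> C"
  unfolding dnorm_def
proof (rule cSUP_least)
  have "(0::'b) \<in> {x. norm x \<le> 1}" by simp
  then show "{x::'b. norm x \<le> 1} \<noteq> {}" by blast
next
  fix x :: 'b assume "x \<in> {x. norm x \<le> 1}"
  then have "C * norm x \<le> C" using assms(2) by (simp add: mult_left_le)
  then show "cmod (\<psi> x) \<le> C" using assms(1)[of x] by linarith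
qed

lemma dual_plus:
  assumes "\<phi> \<in> dual sc" "\<psi> \<in> dual sc"
  shows "(\<lambda>x. \<phi> x + \<psi> x) \<in> dual sc"
proof (rule dualI[where K = "dnorm \<phi> + dnorm \<psi>"])
  show "cmod (\<phi> x + \<psi> x) \<le> (dnorm \<phi> + dnorm \<psi>) * norm x" for x
    using norm_triangle_ineq[of "\<phi> x" "\<psi> x"] dnorm_bound[OF assms(1), of x]
      dnorm_bound[OF assms(2), of x] by (simp add: distrib_right)
qed (simp_all add: dualD[OF assms(1)] dualD[OF assms(2)] distrib_left)

lemma dual_scale:
  assumes "\<phi> \<in> dual sc"
  shows "(\<lambda>x. c * \<phi> x) \<in> dual sc"
proof (rule dualI[where K = "cmod c * dnorm \<phi>"])
  show "cmod (c * \<phi> x) \<le> (cmod c * dnorm \<phi>) * norm x" for x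
    using dnorm_bound[OF assms, of x] by (simp add: norm_mult mult.assoc mult_left_mono)
qed (simp_all add: dualD[OF assms] distrib_left)

lemma dual_lincomb:
  assumes "finite F" "F \<subseteq> dual sc"
  shows "(\<lambda>x. \<Sum>\<phi>\<in>F. c \<phi> * \<phi> x) \<in> dual sc"
  using assms
proof (induction F rule: finite_induct)
  case empty
  show ?case by (rule dualI[where K = 0]) auto
next
  case (insert \<phi> F)
  then show ?case by (simp add: dual_plus dual_scale)
qed

lemma bidualD:
  assumes "n \<in> bidual sc" "\<phi> \<in> dual sc"
  shows bidual_plus: "\<psi> \<in> dual sc \<Longrightarrow> n (\<lambda>x. \<phi> x + \<psi> x) = n \<phi> + n \<psi>"
    and bidual_scale: "n (\<lambda>x. c * \<phi> x) = c * n \<phi>"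
  using assms unfolding bidual_def by auto

lemma bidual_bound:
  assumes "n \<in> bidual sc"
  obtains K where "K \<ge> 0" "\<And>\<phi>. \<phi> \<in> dual sc \<Longrightarrow> cmod (n \<phi>) \<le> K * dnorm \<phi>"
proof -
  obtain K where K: "\<forall>\<phi>\<in>dual sc. cmod (n \<phi>) \<le> K * dnorm \<phi>"
    using assms unfolding bidual_def by auto
  have "cmod (n \<phi>) \<le> max K 0 * dnorm \<phi>" if "\<phi> \<in> dual sc" for \<phi>
    using K that dnorm_nonneg[OF that] by (meson max.cobounded1 mult_right_mono order_trans)
  then show ?thesis using that[of "max K 0"] by simp
qed

lemma bidual_lincomb:
  assumes "n \<in> bidual sc" "finite F" "F \<subseteq> dual sc"
  shows "n (\<lambda>x. \<Sum>\<phi>\<in>F. c \<phi> * \<phi> x) = (\<Sum>\<phi>\<in>F. c \<phi> * n \<phi>)"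
  using assms(2,3)
proof (induction F rule: finite_induct)
  case empty
  have zero: "(\<lambda>x::'b. 0::complex) \<in> dual sc" by (rule dualI[where K = 0]) auto
  show ?case using bidual_scale[OF assms(1) zero, of 0] by simp
next
  case (insert \<phi> F)
  have "(\<lambda>x. \<Sum>\<psi>\<in>insert \<phi> F. c \<psi> * \<psi> x) = (\<lambda>x. c \<phi> * \<phi> x + (\<Sum>\<psi>\<in>F. c \<psi> * \<psi> x))"
    using insert.hyps by simp
  then show ?case
    using insert bidual_plus[OF assms(1) dual_scale dual_lincomb] bidual_scale[OF assms(1)] by simp
qed

text \<open>Composing an element of B** with a bounded linear map B \<rightarrow> B* yields an element of B*.
  This is how the Arens module actions produce functionals on B.\<close>

lemma bidual_comp_dual:
  assumes n: "n \<in> bidual sc" and T: "\<And>x. T x \<in> dual sc"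
    and add: "\<And>x y. T (x + y) = (\<lambda>b. T x b + T y b)"
    and hom: "\<And>c x. T (sc c x) = (\<lambda>b. c * T x b)"
    and bound: "\<And>x. dnorm (T x) \<le> C * norm x"
  shows "(\<lambda>x. n (T x)) \<in> dual sc"
proof -
  obtain K where K: "K \<ge> 0" "\<And>\<phi>. \<phi> \<in> dual sc \<Longrightarrow> cmod (n \<phi>) \<le> K * dnorm \<phi>"
    using bidual_bound[OF n] by blast
  show ?thesis
  proof (rule dualI)
    show "n (T (x + y)) = n (T x) + n (T y)" for x y
      using bidual_plus[OF n T T] add by simp
    show "n (T (sc c x)) = c * n (T x)" for c x
      using bidual_scale[OF n T] hom by simp
    show "cmod (n (T x)) \<le> (K * C) * norm x" for x
    proof -
      have "cmod (n (T x)) \<le> K * dnorm (T x)" by (rule K(2)[OF T])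
      also have "\<dots> \<le> K * (C * norm x)" using bound K(1) by (rule mult_left_mono)
      finally show ?thesis by (simp add: mult.assoc)
    qed
  qed
qed

section \<open>The weak* closure of a subspace is its biannihilator\<close>

lemma annihilatorD:
  assumes "\<mu> \<in> annihilator sc A"
  shows "\<mu> \<in> dual sc" and "a \<in> A \<Longrightarrow> \<mu> a = 0"
  using assms unfolding annihilator_def by auto

lemma lincomb_of_kernel_containment:
  assumes Aadd: "\<forall>x\<in>A. \<forall>y\<in>A. x + y \<in> A" and Asc: "\<forall>c. \<forall>x\<in>A. sc c x \<in> A"
    and "finite F" "F \<subseteq> dual sc"
  shows "\<psi> \<in> dual sc \<Longrightarrow> (\<forall>a\<in>A. (\<forall>\<phi>\<in>F. \<phi> a = 0) \<longrightarrow> \<psi> a = 0) \<Longrightarrow>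
      \<exists>c. \<forall>a\<in>A. \<psi> a = (\<Sum>\<phi>\<in>F. c \<phi> * \<phi> a)"
  using assms(3,4)
proof (induction F arbitrary: \<psi> rule: finite_induct)
  case empty
  then show ?case by simp
next
  case (insert \<phi>0 F)
  have p0: "\<phi>0 \<in> dual sc" and FD: "F \<subseteq> dual sc" using insert.prems by auto
  text \<open>It suffices to write \<psi> - t \<phi>0 as a combination of F on A, for a suitable t.\<close>
  have step: "\<exists>c. \<forall>a\<in>A. \<psi> a = (\<Sum>\<phi>\<in>insert \<phi>0 F. c \<phi> * \<phi> a)"
    if t: "\<forall>a\<in>A. (\<forall>\<phi>\<in>F. \<phi> a = 0) \<longrightarrow> \<psi> a = t * \<phi>0 a" for t
  proof -
    define \<psi>' where "\<psi>' = (\<lambda>x. \<psi> x + (- t) * \<phi>0 x)"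
    have "\<psi>' \<in> dual sc" unfolding \<psi>'_def by (intro dual_plus dual_scale insert.prems p0)
    moreover have "\<forall>a\<in>A. (\<forall>\<phi>\<in>F. \<phi> a = 0) \<longrightarrow> \<psi>' a = 0" using t by (simp add: \<psi>'_def)
    ultimately obtain c where c: "\<forall>a\<in>A. \<psi>' a = (\<Sum>\<phi>\<in>F. c \<phi> * \<phi> a)"
      using insert.IH FD by blast
    have "(\<Sum>\<phi>\<in>F. (c(\<phi>0 := t)) \<phi> * \<phi> a) = (\<Sum>\<phi>\<in>F. c \<phi> * \<phi> a)" for a
      using insert.hyps by (intro sum.cong) auto
    moreover have "\<psi> a = t * \<phi>0 a + \<psi>' a" for a by (simp add: \<psi>'_def)
    ultimately have "\<forall>a\<in>A. \<psi> a = (\<Sum>\<phi>\<in>insert \<phi>0 F. (c(\<phi>0 := t)) \<phi> * \<phi> a)"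
      using c insert.hyps by simp
    then show ?thesis by blast
  qed
  show ?case
  proof (cases "\<exists>k\<in>A. (\<forall>\<phi>\<in>F. \<phi> k = 0) \<and> \<phi>0 k \<noteq> 0")
    case False
    then have "\<forall>a\<in>A. (\<forall>\<phi>\<in>F. \<phi> a = 0) \<longrightarrow> \<psi> a = 0 * \<phi>0 a"
      using insert.prems(2) by auto
    then show ?thesis by (rule step)
  next
    case True
    then obtain k where k: "k \<in> A" "\<forall>\<phi>\<in>F. \<phi> k = 0" "\<phi>0 k \<noteq> 0" by blast
    have "\<psi> a = (\<psi> k / \<phi>0 k) * \<phi>0 a" if a: "a \<in> A" "\<forall>\<phi>\<in>F. \<phi> a = 0" for a
    proof -
      text \<open>Correct a along k so that also \<phi>0 vanishes; then \<psi> vanishes as well.\<close>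
      define r where "r = - (\<phi>0 a / \<phi>0 k)"
      have lin: "\<phi> (a + sc r k) = \<phi> a + r * \<phi> k" if "\<phi> \<in> dual sc" for \<phi>
        by (simp add: dualD[OF that])
      have "a + sc r k \<in> A" using Aadd Asc a k by blast
      moreover have "\<phi> (a + sc r k) = 0" if "\<phi> \<in> insert \<phi>0 F" for \<phi>
      proof -
        have "\<phi> \<in> dual sc" using that p0 FD by auto
        then have "\<phi> (a + sc r k) = \<phi> a + r * \<phi> k" by (rule lin)
        then show ?thesis using that a k by (auto simp: r_def)
      qed
      ultimately have "\<psi> (a + sc r k) = 0" using insert.prems(2) by blast
      then show ?thesis using lin[OF insert.prems(1)] k(3) by (simp add: r_def field_simps)
    qed
    then show ?thesis by (intro step[of "\<psi> k / \<phi>0 k"]) blast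
  qed
qed

lemma biannihilator_interpolates:
  assumes Aadd: "\<forall>x\<in>A. \<forall>y\<in>A. x + y \<in> A" and Asc: "\<forall>c. \<forall>x\<in>A. sc c x \<in> A" and "A \<noteq> {}"
    and q: "q \<in> biannihilator sc A" and "finite F" "F \<subseteq> dual sc"
  shows "\<exists>a\<in>A. \<forall>\<phi>\<in>F. \<phi> a = q \<phi>"
  using assms(5,6)
proof (induction F rule: finite_induct)
  case empty
  then show ?case using \<open>A \<noteq> {}\<close> by blast
next
  case (insert \<psi> F)
  have p: "\<psi> \<in> dual sc" and FD: "F \<subseteq> dual sc" using insert.prems by auto
  have qb: "q \<in> bidual sc" and qA: "\<And>\<phi>. \<phi> \<in> annihilator sc A \<Longrightarrow> q \<phi> = 0"
    using q unfolding biannihilator_def by auto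
  obtain a0 where a0: "a0 \<in> A" "\<forall>\<phi>\<in>F. \<phi> a0 = q \<phi>" using insert.IH[OF FD] by blast
  show ?case
  proof (cases "\<exists>k\<in>A. (\<forall>\<phi>\<in>F. \<phi> k = 0) \<and> \<psi> k \<noteq> 0")
    case True
    text \<open>Some direction k in A is invisible to F but not to \<psi>: correct a0 along k.\<close>
    then obtain k where k: "k \<in> A" "\<forall>\<phi>\<in>F. \<phi> k = 0" "\<psi> k \<noteq> 0" by blast
    define r where "r = (q \<psi> - \<psi> a0) / \<psi> k"
    have lin: "\<phi> (a0 + sc r k) = \<phi> a0 + r * \<phi> k" if "\<phi> \<in> dual sc" for \<phi>
      by (simp add: dualD[OF that])
    have "a0 + sc r k \<in> A" using Aadd Asc a0 k by blast
    moreover have "\<phi> (a0 + sc r k) = q \<phi>" if "\<phi> \<in> insert \<psi> F" for \<phi>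
      using that lin[OF p] lin[of \<phi>] FD a0 k by (auto simp: r_def)
    ultimately show ?thesis by blast
  next
    case False
    text \<open>Otherwise \<psi> is a combination \<Sigma> of F on A, so \<psi> - \<Sigma> annihilates A and q cannot
      distinguish \<psi> from \<Sigma>; hence a0 already works.\<close>
    then obtain c where c: "\<forall>a\<in>A. \<psi> a = (\<Sum>\<phi>\<in>F. c \<phi> * \<phi> a)"
      using lincomb_of_kernel_containment[OF Aadd Asc insert.hyps(1) FD p] by auto
    define S where "S = (\<lambda>x. \<Sum>\<phi>\<in>F. c \<phi> * \<phi> x)"
    define \<delta> where "\<delta> = (\<lambda>x. \<psi> x + (-1) * S x)"
    have S: "S \<in> dual sc" "q S = (\<Sum>\<phi>\<in>F. c \<phi> * q \<phi>)"
      using dual_lincomb bidual_lincomb[OF qb] insert.hyps(1) FD unfolding S_def by auto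
    have \<delta>: "\<delta> \<in> dual sc" unfolding \<delta>_def by (intro dual_plus dual_scale p S(1))
    have "\<delta> \<in> annihilator sc A" unfolding annihilator_def using \<delta> c by (simp add: \<delta>_def S_def)
    moreover have "(\<lambda>x. \<delta> x + S x) = \<psi>" unfolding \<delta>_def by auto
    ultimately have "q \<psi> = (\<Sum>\<phi>\<in>F. c \<phi> * q \<phi>)"
      using bidual_plus[OF qb \<delta> S(1)] qA S(2) by simp
    then show ?thesis using c a0 by (intro bexI[OF _ a0(1)]) auto
  qed
qed

theorem weak_star_closure_eq_biannihilator:
  assumes Aadd: "\<forall>x\<in>A. \<forall>y\<in>A. x + y \<in> A" and Asc: "\<forall>c. \<forall>x\<in>A. sc c x \<in> A" and "A \<noteq> {}"
  shows "weak_star_closure sc (emb sc ` A) = biannihilator sc A"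
proof (intro set_eqI iffI)
  fix q assume cl: "q \<in> weak_star_closure sc (emb sc ` A)"
  have "q \<phi> = 0" if \<phi>: "\<phi> \<in> annihilator sc A" for \<phi>
  proof -
    text \<open>q is approximated at \<phi> by values \<phi> a = 0.\<close>
    have "cmod (q \<phi>) < e" if "e > 0" for e
    proof -
      obtain a where "a \<in> A" "cmod (q \<phi> - emb sc a \<phi>) < e"
        using cl \<open>e > 0\<close> annihilatorD(1)[OF \<phi>] unfolding weak_star_closure_def
        by (auto dest!: spec[of _ "{\<phi>}"])
      then show ?thesis using annihilatorD[OF \<phi>] by (simp add: emb_def)
    qed
    then show ?thesis by (metis less_irrefl zero_less_norm_iff)
  qed
  then show "q \<in> biannihilator sc A"
    using cl unfolding weak_star_closure_def biannihilator_def by auto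
next
  fix q assume q: "q \<in> biannihilator sc A"
  have "\<exists>s\<in>emb sc ` A. \<forall>\<phi>\<in>F. cmod (q \<phi> - s \<phi>) < e"
    if F: "finite F" "F \<subseteq> dual sc" and e: "e > 0" for F and e :: real
  proof -
    obtain a where "a \<in> A" "\<forall>\<phi>\<in>F. \<phi> a = q \<phi>"
      using biannihilator_interpolates[OF assms q F] by blast
    then show ?thesis using F e by (intro bexI[of _ "emb sc a"]) (auto simp: emb_def)
  qed
  then show "q \<in> weak_star_closure sc (emb sc ` A)"
    using q unfolding weak_star_closure_def biannihilator_def by auto
qed

end

section \<open>Module actions of the bidual on the dual\<close>

locale complex_algebra_scalars = complex_scalars sc
  for sc :: "complex \<Rightarrow> 'b::real_normed_algebra_1 \<Rightarrow> 'b" +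
  assumes sc_mult_left: "\<And>a x y. sc a (x * y) = sc a x * y"
    and sc_mult_right: "\<And>a x y. sc a (x * y) = x * sc a y"
begin

lemma dual_translate_bound:
  assumes "\<phi> \<in> dual sc"
  shows "cmod (\<phi> (a * b)) \<le> dnorm \<phi> * norm a * norm b"
    and "cmod (\<phi> (b * a)) \<le> dnorm \<phi> * norm a * norm b"
proof -
  have "dnorm \<phi> * norm (a * b) \<le> dnorm \<phi> * (norm a * norm b)"
    "dnorm \<phi> * norm (b * a) \<le> dnorm \<phi> * (norm a * norm b)"
    using dnorm_nonneg[OF assms] norm_mult_ineq[of a b] norm_mult_ineq[of b a]
    by (auto intro: mult_left_mono simp: mult.commute)
  then show "cmod (\<phi> (a * b)) \<le> dnorm \<phi> * norm a * norm b"
    and "cmod (\<phi> (b * a)) \<le> dnorm \<phi> * norm a * norm b"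
    using dnorm_bound[OF assms, of "a * b"] dnorm_bound[OF assms, of "b * a"]
    by (simp_all add: mult.assoc)
qed

lemma dual_left_translate:
  assumes "\<phi> \<in> dual sc"
  shows "(\<lambda>b. \<phi> (a * b)) \<in> dual sc" and "dnorm (\<lambda>b. \<phi> (a * b)) \<le> dnorm \<phi> * norm a"
proof -
  have bound: "cmod (\<phi> (a * b)) \<le> (dnorm \<phi> * norm a) * norm b" for b
    by (rule dual_translate_bound(1)[OF assms])
  show "(\<lambda>b. \<phi> (a * b)) \<in> dual sc"
    by (rule dualI[OF _ _ bound]) (simp_all add: dualD[OF assms] distrib_left sc_mult_right[symmetric])
  show "dnorm (\<lambda>b. \<phi> (a * b)) \<le> dnorm \<phi> * norm a"
    by (rule dnorm_le[OF bound]) (simp add: dnorm_nonneg[OF assms])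
qed

lemma dual_right_translate:
  assumes "\<phi> \<in> dual sc"
  shows "(\<lambda>b. \<phi> (b * a)) \<in> dual sc" and "dnorm (\<lambda>b. \<phi> (b * a)) \<le> dnorm \<phi> * norm a"
proof -
  have bound: "cmod (\<phi> (b * a)) \<le> (dnorm \<phi> * norm a) * norm b" for b
    by (rule dual_translate_bound(2)[OF assms])
  show "(\<lambda>b. \<phi> (b * a)) \<in> dual sc"
    by (rule dualI[OF _ _ bound]) (simp_all add: dualD[OF assms] distrib_right sc_mult_left[symmetric])
  show "dnorm (\<lambda>b. \<phi> (b * a)) \<le> dnorm \<phi> * norm a"
    by (rule dnorm_le[OF bound]) (simp add: dnorm_nonneg[OF assms])
qed

text \<open>The first is the functional n\<cdot>\<phi> occurring in the Arens product.\<close>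

lemma bidual_left_action:
  assumes "n \<in> bidual sc" "\<phi> \<in> dual sc"
  shows "(\<lambda>a. n (\<lambda>b. \<phi> (a * b))) \<in> dual sc"
  by (rule bidual_comp_dual[OF assms(1) dual_left_translate(1)[OF assms(2)] _ _
        dual_left_translate(2)[OF assms(2)]])
    (auto simp: distrib_right dualD[OF assms(2)] sc_mult_left[symmetric])

lemma bidual_right_action:
  assumes "n \<in> bidual sc" "\<phi> \<in> dual sc"
  shows "(\<lambda>x. n (\<lambda>b. \<phi> (b * x))) \<in> dual sc"
  by (rule bidual_comp_dual[OF assms(1) dual_right_translate(1)[OF assms(2)] _ _
        dual_right_translate(2)[OF assms(2)]])
    (auto simp: distrib_left dualD[OF assms(2)] sc_mult_right[symmetric])

lemma arens_emb_right:
  assumes "\<mu> \<in> dual sc"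
  shows "arens sc q (emb sc a) \<mu> = q (\<lambda>b. \<mu> (b * a))"
  using assms dual_left_translate(1)[OF assms] by (simp add: arens_def emb_def)

lemma arens_emb_left:
  assumes "\<mu> \<in> dual sc" "q \<in> bidual sc"
  shows "arens sc (emb sc a) q \<mu> = q (\<lambda>c. \<mu> (a * c))"
  using assms bidual_left_action[OF assms(2,1)] by (simp add: arens_def emb_def)

lemma arens_emb_middle:
  assumes "\<mu> \<in> dual sc" "q \<in> bidual sc"
  shows "arens sc (arens sc q (emb sc a)) q \<mu> = q (\<lambda>b. q (\<lambda>c. \<mu> (b * a * c)))"
proof -
  have "arens sc (arens sc q (emb sc a)) q \<mu> = arens sc q (emb sc a) (\<lambda>b. q (\<lambda>c. \<mu> (b * c)))"
    using assms(1) by (simp add: arens_def[of sc "arens sc q (emb sc a)"])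
  also have "\<dots> = q (\<lambda>b. q (\<lambda>c. \<mu> (b * a * c)))"
    using arens_emb_right[OF bidual_left_action[OF assms(2,1)]] by (simp add: mult.assoc)
  finally show ?thesis .
qed

lemma arens_self:
  assumes "\<mu> \<in> dual sc"
  shows "arens sc q q \<mu> = q (\<lambda>b. q (\<lambda>c. \<mu> (b * c)))"
  using assms by (simp add: arens_def)

lemma module_actions_dual:
  assumes "\<mu> \<in> dual sc" "q \<in> bidual sc"
  shows "fun_right sc \<mu> q \<in> dual sc" "fun_left sc q \<mu> \<in> dual sc" "fun_both sc q \<mu> \<in> dual sc"
proof -
  have "fun_right sc \<mu> q = (\<lambda>x. q (\<lambda>b. \<mu> (b * x)))"
    unfolding fun_right_def using arens_emb_right[OF assms(1)] by simp
  then show "fun_right sc \<mu> q \<in> dual sc" using bidual_right_action[OF assms(2,1)] by simp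
  have "fun_left sc q \<mu> = (\<lambda>x. q (\<lambda>c. \<mu> (x * c)))"
    unfolding fun_left_def using arens_emb_left[OF assms] by simp
  then show "fun_left sc q \<mu> \<in> dual sc" using bidual_left_action[OF assms(2,1)] by simp
  have "fun_both sc q \<mu> = (\<lambda>x. q (\<lambda>b. q (\<lambda>c. \<mu> (b * x * c))))"
    unfolding fun_both_def using arens_emb_middle[OF assms] by (simp add: mult.assoc)
  then show "fun_both sc q \<mu> \<in> dual sc"
    using bidual_right_action[OF assms(2) bidual_left_action[OF assms(2,1)]] by simp
qed

section \<open>Annihilators of a unital subalgebra\<close>

lemma annihilator_sub_preannihilator_iff:
  "annihilator sc A \<subseteq> preannihilator sc (f ` A) \<longleftrightarrow> (\<forall>\<mu>\<in>annihilator sc A. \<forall>a\<in>A. f a \<mu> = 0)"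
  unfolding annihilator_def preannihilator_def by auto

lemma action_in_annihilator_iff:
  assumes "\<And>\<mu>. \<mu> \<in> annihilator sc A \<Longrightarrow> (\<lambda>x. f x \<mu>) \<in> dual sc"
  shows "(\<forall>\<mu>\<in>annihilator sc A. (\<lambda>x. f x \<mu>) \<in> annihilator sc A) \<longleftrightarrow>
         annihilator sc A \<subseteq> preannihilator sc (f ` A)"
  using assms unfolding annihilator_sub_preannihilator_iff by (auto simp: annihilator_def)

text \<open>Hence conditions (5), (5'), (6) of the theorem are (3), (3'), (4) in disguise.\<close>

lemma module_action_conditions:
  assumes "q \<in> bidual sc"
  shows "(\<forall>\<mu>\<in>annihilator sc A. fun_right sc \<mu> q \<in> annihilator sc A) \<longleftrightarrow>
       annihilator sc A \<subseteq> preannihilator sc ((\<lambda>a. arens sc q (emb sc a)) ` A)"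
    and "(\<forall>\<mu>\<in>annihilator sc A. fun_left sc q \<mu> \<in> annihilator sc A) \<longleftrightarrow>
       annihilator sc A \<subseteq> preannihilator sc ((\<lambda>a. arens sc (emb sc a) q) ` A)"
    and "(\<forall>\<mu>\<in>annihilator sc A. fun_both sc q \<mu> \<in> annihilator sc A) \<longleftrightarrow>
       annihilator sc A \<subseteq> preannihilator sc ((\<lambda>a. arens sc (arens sc q (emb sc a)) q) ` A)"
proof -
  note in_dual = module_actions_dual[OF annihilatorD(1) assms]
  show "(\<forall>\<mu>\<in>annihilator sc A. fun_right sc \<mu> q \<in> annihilator sc A) \<longleftrightarrow>
       annihilator sc A \<subseteq> preannihilator sc ((\<lambda>a. arens sc q (emb sc a)) ` A)"
    and "(\<forall>\<mu>\<in>annihilator sc A. fun_left sc q \<mu> \<in> annihilator sc A) \<longleftrightarrow>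
       annihilator sc A \<subseteq> preannihilator sc ((\<lambda>a. arens sc (emb sc a) q) ` A)"
    and "(\<forall>\<mu>\<in>annihilator sc A. fun_both sc q \<mu> \<in> annihilator sc A) \<longleftrightarrow>
       annihilator sc A \<subseteq> preannihilator sc ((\<lambda>a. arens sc (arens sc q (emb sc a)) q) ` A)"
    unfolding fun_right_def fun_left_def fun_both_def
    by (rule action_in_annihilator_iff; use in_dual in \<open>simp add: fun_right_def fun_left_def fun_both_def\<close>)+
qed

context
  fixes A :: "'b set"
  assumes Amul: "\<And>x y. x \<in> A \<Longrightarrow> y \<in> A \<Longrightarrow> x * y \<in> A" and A1: "1 \<in> A"
begin

lemma annihilator_translate:
  assumes "\<mu> \<in> annihilator sc A" "a \<in> A"
  shows "(\<lambda>b. \<mu> (a * b)) \<in> annihilator sc A" "(\<lambda>b. \<mu> (b * a)) \<in> annihilator sc A"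
  using dual_left_translate(1) dual_right_translate(1) annihilatorD[OF assms(1)] Amul[OF assms(2)]
    Amul[OF _ assms(2)]
  unfolding annihilator_def by simp_all

lemma biannihilator_left_action:
  assumes "q \<in> biannihilator sc A" "\<mu> \<in> annihilator sc A"
  shows "(\<lambda>b. q (\<lambda>c. \<mu> (b * c))) \<in> annihilator sc A"
  using bidual_left_action[OF _ annihilatorD(1)[OF assms(2)]] annihilator_translate(1)[OF assms(2)] assms(1)
  unfolding biannihilator_def annihilator_def by simp

lemma right_product_condition:
  assumes "q \<in> bidual sc"
  shows "annihilator sc A \<subseteq> preannihilator sc ((\<lambda>a. arens sc q (emb sc a)) ` A) \<longleftrightarrow>
         q \<in> biannihilator sc A"
proof -
  have "arens sc q (emb sc a) \<mu> = q (\<lambda>b. \<mu> (b * a))" if "\<mu> \<in> annihilator sc A" for \<mu> a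
    by (rule arens_emb_right[OF annihilatorD(1)[OF that]])
  then show ?thesis
    using assms A1 annihilator_translate(2)
    unfolding annihilator_sub_preannihilator_iff biannihilator_def by fastforce
qed

lemma left_product_condition:
  assumes "q \<in> bidual sc"
  shows "annihilator sc A \<subseteq> preannihilator sc ((\<lambda>a. arens sc (emb sc a) q) ` A) \<longleftrightarrow>
         q \<in> biannihilator sc A"
proof -
  have "arens sc (emb sc a) q \<mu> = q (\<lambda>c. \<mu> (a * c))" if "\<mu> \<in> annihilator sc A" for \<mu> a
    by (rule arens_emb_left[OF annihilatorD(1)[OF that] assms])
  then show ?thesis
    using assms A1 annihilator_translate(1)
    unfolding annihilator_sub_preannihilator_iff biannihilator_def by fastforce
qed

text \<open>For the two-sided condition, idempotence of q is what recovers q \<mu> = 0 at a = 1.\<close>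

lemma two_sided_product_condition:
  assumes "q \<in> bidual sc" "arens sc q q = q"
  shows "annihilator sc A \<subseteq> preannihilator sc ((\<lambda>a. arens sc (arens sc q (emb sc a)) q) ` A) \<longleftrightarrow>
         q \<in> biannihilator sc A"
  unfolding annihilator_sub_preannihilator_iff
proof
  assume h: "\<forall>\<mu>\<in>annihilator sc A. \<forall>a\<in>A. arens sc (arens sc q (emb sc a)) q \<mu> = 0"
  have "q \<mu> = 0" if "\<mu> \<in> annihilator sc A" for \<mu>
    using h that A1 arens_emb_middle[OF annihilatorD(1)[OF that] assms(1), of 1]
      arens_self[OF annihilatorD(1)[OF that], of q] assms(2) by simp
  then show "q \<in> biannihilator sc A" using assms(1) by (simp add: biannihilator_def)
next
  assume q: "q \<in> biannihilator sc A"
  show "\<forall>\<mu>\<in>annihilator sc A. \<forall>a\<in>A. arens sc (arens sc q (emb sc a)) q \<mu> = 0"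
  proof (intro ballI)
    fix \<mu> a assume \<mu>: "\<mu> \<in> annihilator sc A" and a: "a \<in> A"
    have "(\<lambda>b. q (\<lambda>c. \<mu> (b * a * c))) \<in> annihilator sc A"
      using annihilator_translate(2)[OF biannihilator_left_action[OF q \<mu>] a]
      by (simp add: mult.assoc)
    then show "arens sc (arens sc q (emb sc a)) q \<mu> = 0"
      using q arens_emb_middle[OF annihilatorD(1)[OF \<mu>] assms(1)]
      by (simp add: biannihilator_def)
  qed
qed

end

end

lemma cstar_algebra_scalars:
  assumes "cstar_algebra sc st"
  shows "complex_algebra_scalars sc"
  using assms unfolding cstar_algebra_def by unfold_locales meson+

theorem lemma2p1:
  fixes sc :: "complex \<Rightarrow> 'b::{real_normed_algebra_1, banach} \<Rightarrow> 'b"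
    and st :: "'b \<Rightarrow> 'b"
    and A :: "'b set"
    and q :: "('b \<Rightarrow> complex) \<Rightarrow> complex"
  assumes "cstar_algebra sc st"
    and "unital_closed_subalgebra sc A"
    and "bidual_projection sc st q"
  shows "(q \<in> weak_star_closure sc (emb sc ` A) \<longleftrightarrow> q \<in> biannihilator sc A)
     \<and> (q \<in> weak_star_closure sc (emb sc ` A) \<longleftrightarrow>
           annihilator sc A \<subseteq> preannihilator sc ((\<lambda>a. arens sc q (emb sc a)) ` A))
     \<and> (q \<in> weak_star_closure sc (emb sc ` A) \<longleftrightarrow>
           annihilator sc A \<subseteq> preannihilator sc ((\<lambda>a. arens sc (emb sc a) q) ` A))
     \<and> (q \<in> weak_star_closure sc (emb sc ` A) \<longleftrightarrow>
           annihilator sc A \<subseteq> preannihilator sc ((\<lambda>a. arens sc (arens sc q (emb sc a)) q) ` A))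
     \<and> (q \<in> weak_star_closure sc (emb sc ` A) \<longleftrightarrow>
           (\<forall>\<mu>\<in>annihilator sc A. fun_right sc \<mu> q \<in> annihilator sc A))
     \<and> (q \<in> weak_star_closure sc (emb sc ` A) \<longleftrightarrow>
           (\<forall>\<mu>\<in>annihilator sc A. fun_left sc q \<mu> \<in> annihilator sc A))
     \<and> (q \<in> weak_star_closure sc (emb sc ` A) \<longleftrightarrow>
           (\<forall>\<mu>\<in>annihilator sc A. fun_both sc q \<mu> \<in> annihilator sc A))"
proof -
  interpret complex_algebra_scalars sc using cstar_algebra_scalars[OF assms(1)] .
  have A: "\<forall>x\<in>A. \<forall>y\<in>A. x + y \<in> A" "\<forall>c. \<forall>x\<in>A. sc c x \<in> A" "\<And>x y. x \<in> A \<Longrightarrow> y \<in> A \<Longrightarrow> x * y \<in> A"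
    "1 \<in> A"
    using assms(2) unfolding unital_closed_subalgebra_def by auto
  have q: "q \<in> bidual sc" "arens sc q q = q"
    using assms(3) unfolding bidual_projection_def by auto
  have closure: "weak_star_closure sc (emb sc ` A) = biannihilator sc A"
    by (rule weak_star_closure_eq_biannihilator) (use A in auto)
  show ?thesis
    by (simp only: closure module_action_conditions[OF q(1)] right_product_condition[OF A(3,4) q(1)]
        left_product_condition[OF A(3,4) q(1)] two_sided_product_condition[OF A(3,4) q])
qed

end
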